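(* Let $0<d<2$, $h\in\{1,2\}$, and let $M=M(n)$ satisfy $1\le M\le m$. Then, with probability tending to $1$ as $n\to\infty$, the pruned formula $\hat\Phi_h(M,m-M)$ is obtained from $\hat\Phi_h(M-1,m-M)$ by adding the clause $\vec a_M$.
   Context: A 2-CNF is a conjunction of clauses, each the disjunction of two literals on two distinct variables. Let $m=m_n\sim dn/2$. Let $(\vec a_i),(\vec a'_i),(\vec a''_i)$ be mutually independent sequences of independent clauses, each uniform among the $4\binom n2$ clauses on two distinct variables of $x_1,\dots,x_n$. Set $$\Phi_1(M,M')=\vec a_1\wedge\cdots\wedge\vec a_M\wedge\vec a'_1\wedge\cdots\wedge\vec a'_{M'},\qquad\Phi_2(M,M')=\vec a_1\wedge\cdots\wedge\vec a_M\wedge\vec a''_1\wedge\cdots\wedge\vec a''_{M'}.$$ $\hat\Phi_h(M,M')$ is the pruned formula of $\Phi_h(M,M')$. Pruning is defined as follows. For a 2-CNF $\Psi$ and literals $\mathcal L_0$, let $\mathcal L(\Psi,\mathcal L_0)$ be the closure of $\mathcal L_0$ under: if $\Psi$ has a clause $l\vee\neg l'$ with $l'\in\mathcal L$, add $l$. Conflict clauses $\mathcal C(\Psi,\mathcal L_0)$ are the clauses both of whose variables $x$ satisfy $x,\neg x\in\mathcal L(\Psi,\mathcal L_0)$. $\hat\Psi$ is $\Psi$ with $\bigcup_l\mathcal C(\Psi,\{l\})$ removed, $l$ ranging over all literals. *)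

theory Defs
  imports "HOL-Probability.Probability" "HOL-Library.Landau_Symbols" "HOL-Library.Multiset"
begin

(* A literal is (variable index, sign); (v, True) is x_v and (v, False) is its negation. *)
type_synonym lit = "nat \<times> bool"
type_synonym clause = "lit set"
type_synonym cnf = "clause multiset"

definition neg :: "lit \<Rightarrow> lit" where
  "neg l = (fst l, \<not> snd l)"

definition clauses :: "nat \<Rightarrow> clause set" where
  "clauses n = {C. \<exists>l1 l2. C = {l1, l2} \<and> fst l1 \<noteq> fst l2 \<and>
                  fst l1 \<in> {1..n} \<and> fst l2 \<in> {1..n}}"

definition clause_pmf :: "nat \<Rightarrow> clause pmf" where
  "clause_pmf n = pmf_of_set (clauses n)"

(* sample space: for each index i in 1..K, the triple (a_i, a'_i, a''_i) of independent
   uniform clauses; all triples independent *)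
definition sample :: "nat \<Rightarrow> nat \<Rightarrow> (nat \<Rightarrow> clause \<times> clause \<times> clause) pmf" where
  "sample n K = Pi_pmf {1..K} ({}, {}, {})
      (\<lambda>_. pair_pmf (clause_pmf n) (pair_pmf (clause_pmf n) (clause_pmf n)))"

definition Phi :: "nat \<Rightarrow> (nat \<Rightarrow> clause \<times> clause \<times> clause) \<Rightarrow> nat \<Rightarrow> nat \<Rightarrow> cnf" where
  "Phi h \<omega> M M' = mset (map (\<lambda>i. fst (\<omega> i)) [1..<Suc M]) +
      mset (map (\<lambda>i. if h = 1 then fst (snd (\<omega> i)) else snd (snd (\<omega> i))) [1..<Suc M'])"

inductive_set lclosure :: "cnf \<Rightarrow> lit set \<Rightarrow> lit set" for \<Psi> L0 where
  base: "l \<in> L0 \<Longrightarrow> l \<in> lclosure \<Psi> L0"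
| step: "{l, neg l'} \<in># \<Psi> \<Longrightarrow> l' \<in> lclosure \<Psi> L0 \<Longrightarrow> l \<in> lclosure \<Psi> L0"

definition conflicts :: "cnf \<Rightarrow> lit set \<Rightarrow> clause set" where
  "conflicts \<Psi> L0 = {C. C \<in># \<Psi> \<and>
      (\<forall>l\<in>C. (fst l, True) \<in> lclosure \<Psi> L0 \<and> (fst l, False) \<in> lclosure \<Psi> L0)}"

definition prune :: "cnf \<Rightarrow> cnf" where
  "prune \<Psi> = filter_mset (\<lambda>C. C \<notin> (\<Union>l. conflicts \<Psi> {l})) \<Psi>"

end

theory Submission
  imports Defs "HOL-Real_Asymp.Real_Asymp"
begin

text \<open>If appending \<open>a\<^sub>M\<close> changes the pruned formula in any other way, then the implication
  digraph of \<open>\<Phi>\<^sub>h(M, m - M)\<close> contains a literal \<open>l\<close> reaching \<open>\<not>l\<close> and reaching a literal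
  \<open>w\<close> with \<open>\<not>w \<in> a\<^sub>M\<close>. Shortcutting these walks leaves a lollipop (a walk along distinct
  clauses ending in the negation of one of its literals) and a tail walk starting on one of its
  variables; together they use \<open>s\<close> distinct clause positions, one of them the position of
  \<open>a\<^sub>M\<close>, and their clauses are determined by \<open>s\<close> literals and \<open>O(s\<^sup>2)\<close> further choices.
  With at most \<open>s m\<^sup>s\<^sup>-\<^sup>1\<close> choices of positions, \<open>2 s\<^sup>2 (2n)\<^sup>s\<close> literal patterns and
  probability at most \<open>(2n(n - 1))\<^sup>-\<^sup>s\<close> for each, the failure probability is
  \<open>O(m\<^sup>-\<^sup>1 \<Sum>\<^sub>s s\<^sup>4 (m/(n - 1))\<^sup>s) = O(1/m)\<close>, because \<open>m/(n - 1) \<rightarrow> d/2 < 1\<close>.\<close>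

lemma neg_neg [simp]: "neg (neg l) = l"
  by (simp add: neg_def)

lemma neg_neq [simp]: "neg l \<noteq> l" "l \<noteq> neg l"
  by (cases l; simp add: neg_def)+

lemma fst_neg [simp]: "fst (neg l) = fst l"
  by (simp add: neg_def)

lemma lclosure_mono:
  assumes "set_mset \<Psi> \<subseteq> set_mset \<Psi>'" "l \<in> lclosure \<Psi> L0"
  shows "l \<in> lclosure \<Psi>' L0"
  using assms(2) by induct (use assms(1) in \<open>auto intro: lclosure.intros\<close>)

lemma lclosure_trans:
  assumes "z \<in> lclosure \<Psi> {y}" "y \<in> lclosure \<Psi> {x}"
  shows "z \<in> lclosure \<Psi> {x}"
  using assms(1) by induct (use assms(2) in \<open>auto intro: lclosure.step\<close>)

lemma lclosure_contrapos:
  assumes "y \<in> lclosure \<Psi> {x}"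
  shows "neg x \<in> lclosure \<Psi> {neg y}"
  using assms
proof induct
  case (step l l')
  have "{neg l', neg (neg l)} \<in># \<Psi>"
    using step(1) by (simp add: insert_commute)
  then have "neg l' \<in> lclosure \<Psi> {neg l}"
    by (blast intro: lclosure.intros)
  then show ?case
    using step(3) lclosure_trans by blast
qed (simp add: lclosure.base)

lemma lclosure_complementary_imp_neg:
  assumes "x \<in> lclosure \<Psi> {l}" "neg x \<in> lclosure \<Psi> {l}"
  shows "neg l \<in> lclosure \<Psi> {l}"
  using lclosure_contrapos[OF assms(1)] assms(2) lclosure_trans by blast

lemma lclosure_add_mset_unused:
  assumes "\<And>w. w \<in> lclosure (add_mset C \<Psi>) L0 \<Longrightarrow> neg w \<notin> C"
  shows "lclosure (add_mset C \<Psi>) L0 = lclosure \<Psi> L0"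
proof
  show "lclosure (add_mset C \<Psi>) L0 \<subseteq> lclosure \<Psi> L0"
  proof
    fix y assume "y \<in> lclosure (add_mset C \<Psi>) L0"
    then show "y \<in> lclosure \<Psi> L0"
    proof induct
      case (step l l')
      have "{l, neg l'} \<noteq> C"
        using assms[OF step(2)] by auto
      with step(1) have "{l, neg l'} \<in># \<Psi>"
        by simp
      then show ?case
        using step(3) by (rule lclosure.step)
    qed (rule lclosure.base)
  qed
qed (auto intro: lclosure_mono)

text \<open>A nonempty conflict clause for \<open>l\<close> forces \<open>l\<close> to reach \<open>neg l\<close>, and then the closure of
  \<open>l\<close> never uses \<open>C\<close>.\<close>

lemma conflicts_add_mset:
  assumes "C' \<in># \<Psi>"
    and unused: "\<And>w. neg l \<in> lclosure (add_mset C \<Psi>) {l} \<Longrightarrow>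
                   w \<in> lclosure (add_mset C \<Psi>) {l} \<Longrightarrow> neg w \<notin> C"
  shows "C' \<in> conflicts (add_mset C \<Psi>) {l} \<longleftrightarrow> C' \<in> conflicts \<Psi> {l}"
proof
  assume conflict: "C' \<in> conflicts (add_mset C \<Psi>) {l}"
  show "C' \<in> conflicts \<Psi> {l}"
  proof (cases "C' = {}")
    case False
    then obtain x where "x \<in> C'"
      by blast
    then have "(fst x, True) \<in> lclosure (add_mset C \<Psi>) {l}"
      "neg (fst x, True) \<in> lclosure (add_mset C \<Psi>) {l}"
      using conflict by (auto simp: conflicts_def neg_def)
    then have "neg l \<in> lclosure (add_mset C \<Psi>) {l}"
      by (rule lclosure_complementary_imp_neg)
    then show ?thesis
      using conflict lclosure_add_mset_unused[of C \<Psi> "{l}"] unused assms(1)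
      by (simp add: conflicts_def)
  qed (use assms(1) in \<open>simp add: conflicts_def\<close>)
qed (auto simp: conflicts_def intro: lclosure_mono)

lemma prune_add_mset:
  assumes two: "C = {l1, l2}"
    and unused: "\<And>l w. neg l \<in> lclosure (add_mset C \<Psi>) {l} \<Longrightarrow>
                   w \<in> lclosure (add_mset C \<Psi>) {l} \<Longrightarrow> neg w \<notin> C"
  shows "prune (add_mset C \<Psi>) = add_mset C (prune \<Psi>)"
proof -
  have "C \<notin> conflicts (add_mset C \<Psi>) {l}" for l
  proof
    assume "C \<in> conflicts (add_mset C \<Psi>) {l}"
    then have "l1 \<in> lclosure (add_mset C \<Psi>) {l}" "neg l1 \<in> lclosure (add_mset C \<Psi>) {l}"
      using two by (cases l1; cases "snd l1"; auto simp: conflicts_def neg_def)+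
    moreover from this have "neg l \<in> lclosure (add_mset C \<Psi>) {l}"
      by (rule lclosure_complementary_imp_neg)
    ultimately show False
      using unused two by (metis insertI1 neg_neg)
  qed
  moreover have "filter_mset (\<lambda>C'. C' \<notin> (\<Union>l. conflicts (add_mset C \<Psi>) {l})) \<Psi> = prune \<Psi>"
    unfolding prune_def using conflicts_add_mset[OF _ unused] by (intro filter_mset_cong) auto
  ultimately show ?thesis
    unfolding prune_def by simp
qed

section \<open>Walks in the implication digraph\<close>

text \<open>\<open>{y, neg x}\<close> is the clause through which a step of \<^const>\<open>lclosure\<close> passes from \<open>x\<close>
  to \<open>y\<close>.\<close>

fun path_clauses :: "lit list \<Rightarrow> clause list" where
  "path_clauses (x # y # zs) = {y, neg x} # path_clauses (y # zs)"
| "path_clauses _ = []"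

lemma length_path_clauses [simp]: "length (path_clauses xs) = length xs - 1"
  by (induction xs rule: path_clauses.induct) auto

lemma path_clauses_append:
  "path_clauses (xs @ x # ys) = path_clauses (xs @ [x]) @ path_clauses (x # ys)"
  by (induction xs rule: path_clauses.induct) auto

definition walk :: "(nat \<Rightarrow> clause) \<Rightarrow> nat \<Rightarrow> lit list \<Rightarrow> nat list \<Rightarrow> bool" where
  "walk c m xs ps \<longleftrightarrow> xs \<noteq> [] \<and> set ps \<subseteq> {..<m} \<and> map c ps = path_clauses xs"

lemma walk_length:
  assumes "walk c m xs ps"
  shows "length xs = Suc (length ps)"
proof -
  have "length (map c ps) = length (path_clauses xs)" "xs \<noteq> []"
    using assms by (simp_all add: walk_def)
  then show ?thesis
    by simp
qed

lemma walk_singleton [simp]: "walk c m [x] ps \<longleftrightarrow> ps = []"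
  by (auto simp: walk_def)

lemma walk_Cons_Cons:
  "walk c m (x # y # ys) (p # ps) \<longleftrightarrow> p < m \<and> c p = {y, neg x} \<and> walk c m (y # ys) ps"
  by (auto simp: walk_def)

lemma walk_ConsE:
  assumes "walk c m (x # xs) (p # ps)"
  obtains y ys where "xs = y # ys" "p < m" "c p = {y, neg x}" "walk c m (y # ys) ps"
  using assms walk_length[OF assms] by (cases xs) (auto simp: walk_Cons_Cons)

lemma walk_append:
  assumes "walk c m (xs @ [x]) ps" "walk c m (x # ys) qs"
  shows "walk c m (xs @ x # ys) (ps @ qs)"
  using assms unfolding walk_def by (subst path_clauses_append) auto

lemma walk_appendE:
  assumes "walk c m xs (ps @ qs)"
  obtains ys y zs where "xs = ys @ y # zs" "walk c m (ys @ [y]) ps" "walk c m (y # zs) qs"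
proof -
  define k where "k = length ps"
  have len: "length xs = Suc (k + length qs)"
    using walk_length[OF assms] by (simp add: k_def)
  then have xs: "xs = take k xs @ xs ! k # drop (Suc k) xs"
    by (simp add: id_take_nth_drop)
  have "map c ps @ map c qs =
      path_clauses (take k xs @ [xs ! k]) @ path_clauses (xs ! k # drop (Suc k) xs)"
    using assms xs by (metis map_append path_clauses_append walk_def)
  then have "map c ps = path_clauses (take k xs @ [xs ! k])"
    "map c qs = path_clauses (xs ! k # drop (Suc k) xs)"
    using len by (simp_all add: append_eq_append_conv k_def)
  then show thesis
    using that[OF xs] assms by (auto simp: walk_def)
qed

lemma walk_split:
  assumes "walk c m (xs @ x # ys) ps"
  shows "walk c m (xs @ [x]) (take (length xs) ps)" "walk c m (x # ys) (drop (length xs) ps)"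
proof -
  obtain xs' x' ys' where split: "xs @ x # ys = xs' @ x' # ys'"
    and walks: "walk c m (xs' @ [x']) (take (length xs) ps)" "walk c m (x' # ys') (drop (length xs) ps)"
    using assms by (metis append_take_drop_id walk_appendE)
  have "length xs' = length xs"
    using walk_length[OF walks(1)] walk_length[OF assms] by simp
  then have "xs' = xs" "x' = x" "ys' = ys"
    using split by auto
  then show "walk c m (xs @ [x]) (take (length xs) ps)" "walk c m (x # ys) (drop (length xs) ps)"
    using walks by simp_all
qed

lemma walk_snoc:
  assumes "walk c m xs ps" "p < m" "c p = {y, neg (last xs)}"
  shows "walk c m (xs @ [y]) (ps @ [p])"
proof -
  have "xs = butlast xs @ [last xs]"
    using assms(1) by (simp add: walk_def)
  moreover have "walk c m [last xs, y] [p]"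
    using assms(2,3) by (simp add: walk_Cons_Cons)
  ultimately show ?thesis
    using walk_append[of c m "butlast xs" "last xs" ps "[y]" "[p]"] assms(1)
    by (metis append.assoc append_Cons append_Nil)
qed

lemma lclosure_imp_walk:
  assumes "y \<in> lclosure (mset (map c [0..<m])) {x}"
  shows "\<exists>xs ps. walk c m xs ps \<and> hd xs = x \<and> last xs = y"
  using assms
proof induct
  case (base l)
  then show ?case
    by (intro exI[of _ "[x]"] exI[of _ "[]"]) simp
next
  case (step l l')
  then obtain xs ps where xs: "walk c m xs ps" "hd xs = x" "last xs = l'"
    by blast
  from step(1) obtain p where "p < m" "c p = {l, neg l'}"
    by auto
  then have "walk c m (xs @ [l]) (ps @ [p])"
    using walk_snoc xs by blast
  moreover have "hd (xs @ [l]) = x"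
    using xs by (simp add: walk_def)
  ultimately show ?case
    by fastforce
qed

lemma walk_suffix:
  assumes "walk c m ys qs" "y \<in> set (tl ys)"
  obtains as zs rs where "ys = as @ y # zs" "as \<noteq> []" "walk c m (y # zs) rs"
proof -
  obtain y0 rest where "ys = y0 # rest"
    using assms(1) by (cases ys) (auto simp: walk_def)
  moreover obtain as zs where "rest = as @ y # zs"
    using assms(2) \<open>ys = y0 # rest\<close> by (auto dest: split_list)
  ultimately have "ys = (y0 # as) @ y # zs"
    by simp
  then show thesis
    using that walk_split(2) assms(1) by blast
qed

lemma walk_remove_loop:
  assumes "walk c m (xs @ y # ys @ y # zs) ps"
  shows "\<exists>ps'. walk c m (xs @ y # zs) ps'"
proof -
  have "walk c m ((y # ys) @ y # zs) (drop (length xs) ps)"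
    using walk_split(2)[OF assms] by simp
  then have "walk c m (y # zs) (drop (length (y # ys)) (drop (length xs) ps))"
    by (rule walk_split(2))
  then show ?thesis
    using walk_append walk_split(1)[OF assms] by blast
qed

lemma walk_distinct:
  assumes "walk c m xs ps"
  shows "\<exists>xs' ps'. walk c m xs' ps' \<and> hd xs' = hd xs \<and> last xs' = last xs \<and> distinct xs'"
  using assms
proof (induction "length xs" arbitrary: xs ps rule: less_induct)
  case less
  show ?case
  proof (cases "distinct xs")
    case False
    then obtain as y bs cs where xs: "xs = as @ [y] @ bs @ [y] @ cs"
      using not_distinct_decomp by blast
    then obtain ps' where "walk c m (as @ y # cs) ps'"
      using walk_remove_loop[of c m as y bs cs ps] less.prems xs by auto
    moreover have "hd (as @ y # cs) = hd xs" "last (as @ y # cs) = last xs"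
      using xs by (simp_all add: hd_append last_append)
    ultimately show ?thesis
      using less.hyps[of "as @ y # cs"] xs by fastforce
  qed (use less.prems in blast)
qed

definition lollipop :: "(nat \<Rightarrow> clause) \<Rightarrow> nat \<Rightarrow> lit list \<Rightarrow> nat list \<Rightarrow> bool" where
  "lollipop c m xs ps \<longleftrightarrow> walk c m xs ps \<and> distinct ps \<and> neg (last xs) \<in> set (butlast xs)"

lemma not_distinct_first_repeat:
  assumes "\<not> distinct xs"
  shows "\<exists>as y bs cs. xs = as @ y # bs @ y # cs \<and> distinct (as @ y # bs)"
  using assms
proof (induction xs rule: rev_induct)
  case (snoc x xs)
  show ?case
  proof (cases "distinct xs")
    case True
    then obtain as bs where "xs = as @ x # bs"
      using snoc.prems by (auto dest: split_list)
    with True show ?thesis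
      by (intro exI[of _ as] exI[of _ x] exI[of _ bs] exI[of _ "[]"]) simp
  next
    case False
    then obtain as y bs cs where "xs = as @ y # bs @ y # cs" "distinct (as @ y # bs)"
      using snoc.IH by blast
    then show ?thesis
      by (intro exI[of _ as] exI[of _ y] exI[of _ bs] exI[of _ "cs @ [x]"]) simp
  qed
qed simp

text \<open>A walk through distinct literals that reuses a clause must traverse it in the opposite
  direction, which closes a lollipop.\<close>

lemma walk_first_repeat:
  assumes walk: "walk c m xs ps" and "distinct xs" "\<not> distinct ps"
  obtains ys qs zs rs where "xs = ys @ zs" "lollipop c m ys qs" "walk c m zs rs"
    "fst (hd zs) \<in> fst ` set ys"
proof -
  obtain ps1 p ps2 ps3 where ps: "ps = ps1 @ p # ps2 @ p # ps3" and dist: "distinct (ps1 @ p # ps2)"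
    using not_distinct_first_repeat[OF \<open>\<not> distinct ps\<close>] by blast
  obtain xs1 u zs1 where xs: "xs = xs1 @ u # zs1" and w1: "walk c m (xs1 @ [u]) ps1"
    and "walk c m (u # zs1) (p # ps2 @ p # ps3)"
    using walk ps walk_appendE[of c m xs ps1 "p # ps2 @ p # ps3"] by metis
  then obtain v zs2 where zs1: "zs1 = v # zs2" and p: "p < m" "c p = {v, neg u}"
    and "walk c m (v # zs2) (ps2 @ p # ps3)"
    by (auto elim: walk_ConsE)
  then obtain xs2 u' zs3 where zs2: "v # zs2 = xs2 @ u' # zs3" and w2: "walk c m (xs2 @ [u']) ps2"
    and "walk c m (u' # zs3) (p # ps3)"
    by (auto elim: walk_appendE)
  then obtain v' zs4 where zs3: "zs3 = v' # zs4" and p': "c p = {v', neg u'}"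
    and w3: "walk c m (v' # zs4) ps3"
    by (auto elim: walk_ConsE)
  have xs': "xs = (xs1 @ u # xs2 @ [u']) @ zs3"
    using xs zs1 zs2 by simp
  have "v \<in> set (xs2 @ [u'])"
    using zs2 by (cases xs2) auto
  moreover have "v' \<in> set zs3"
    using zs3 by simp
  ultimately have "v \<noteq> v'"
    using \<open>distinct xs\<close> xs' by auto
  then have "v = neg u'" "v' = neg u"
    using p p' by (auto simp: doubleton_eq_iff)
  then obtain xs2' where xs2: "xs2 = v # xs2'"
    using zs2 by (cases xs2) auto
  have "walk c m (u # xs2 @ [u']) (p # ps2)"
    using p w2 xs2 by (simp add: walk_Cons_Cons)
  then have "walk c m (xs1 @ u # xs2 @ [u']) (ps1 @ p # ps2)"
    using walk_append[OF w1] by fastforce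
  then have "lollipop c m (xs1 @ u # xs2 @ [u']) (ps1 @ p # ps2)"
    using dist \<open>v = neg u'\<close> xs2 by (simp add: lollipop_def butlast_append)
  moreover have "fst (hd zs3) \<in> fst ` set (xs1 @ u # xs2 @ [u'])"
    using zs3 \<open>v' = neg u\<close> by simp
  ultimately show thesis
    using that xs' w3 zs3 by blast
qed

lemma lollipop_of_walk:
  assumes "walk c m xs ps" "last xs = neg (hd xs)"
  shows "\<exists>ys qs. lollipop c m ys qs \<and> hd ys = hd xs"
proof -
  obtain xs' ps' where w: "walk c m xs' ps'" "hd xs' = hd xs" "last xs' = last xs" "distinct xs'"
    using walk_distinct[OF assms(1)] by blast
  show ?thesis
  proof (cases "distinct ps'")
    case True
    obtain x rest where xs': "xs' = x # rest"
      using w(1) by (cases xs') (auto simp: walk_def)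
    then have "rest \<noteq> []"
      using w(2,3) assms(2) by auto
    then have "neg (last xs') \<in> set (butlast xs')"
      using xs' w(2,3) assms(2) by simp
    then have "lollipop c m xs' ps'"
      using w(1) True by (simp add: lollipop_def)
    then show ?thesis
      using w(2) by blast
  next
    case False
    then obtain ys qs zs rs where "xs' = ys @ zs" "lollipop c m ys qs"
      using walk_first_repeat[OF w(1,4)] by metis
    moreover have "ys \<noteq> []"
      using \<open>lollipop c m ys qs\<close> by (simp add: lollipop_def walk_def)
    ultimately show ?thesis
      using w(2) by auto
  qed
qed

lemma walk_position_clause:
  assumes "walk c m xs ps" "p \<in> set ps"
  obtains x y where "c p = {y, neg x}" "x \<in> set xs" "y \<in> set (tl xs)"
proof -
  obtain ps1 ps2 where "ps = ps1 @ p # ps2"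
    using split_list[OF assms(2)] by blast
  then obtain xs1 x zs where xs: "xs = xs1 @ x # zs" and "walk c m (x # zs) (p # ps2)"
    using assms(1) by (auto elim: walk_appendE)
  then obtain y zs' where "zs = y # zs'" "c p = {y, neg x}"
    by (auto elim: walk_ConsE)
  moreover have "y \<in> set (tl xs)"
    using xs \<open>zs = y # zs'\<close> by (cases xs1) auto
  ultimately show thesis
    using that xs by simp
qed

lemma walk_positions_disjoint:
  assumes "walk c m xs ps" "walk c m ys qs" "\<forall>y\<in>set (tl ys). fst y \<notin> fst ` set xs"
  shows "set ps \<inter> set qs = {}"
proof (rule ccontr)
  assume "set ps \<inter> set qs \<noteq> {}"
  then obtain p where "p \<in> set ps" "p \<in> set qs"
    by blast
  obtain x x' where x: "c p = {x', neg x}" "x \<in> set xs" "x' \<in> set (tl xs)"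
    using walk_position_clause[OF assms(1) \<open>p \<in> set ps\<close>] by blast
  obtain y y' where y: "c p = {y', neg y}" "y' \<in> set (tl ys)"
    using walk_position_clause[OF assms(2) \<open>p \<in> set qs\<close>] by blast
  have "x' \<in> set xs"
    using x(3) by (cases xs) auto
  then have "fst y' \<in> fst ` set xs"
    using x y by (metis fst_neg image_eqI insertCI insertE singletonD)
  then show False
    using assms(3) y(2) by blast
qed

text \<open>If the tail revisits a variable of the lollipop, restart it there. Otherwise its clauses
  avoid those of the lollipop, and a repeated clause of the tail closes a new lollipop from which
  the rest of the tail continues.\<close>

lemma lollipop_walk_disjoint:
  assumes "lollipop c m xs ps" "walk c m ys qs" "distinct ys" "fst (hd ys) \<in> fst ` set xs"
  shows "\<exists>xs' ps' ys' qs'. lollipop c m xs' ps' \<and> walk c m ys' qs' \<and>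
           fst (hd ys') \<in> fst ` set xs' \<and> last ys' = last ys \<and> distinct (ps' @ qs')"
  using assms
proof (induction "length ys" arbitrary: xs ps ys qs rule: less_induct)
  case less
  show ?case
  proof (cases "\<exists>y\<in>set (tl ys). fst y \<in> fst ` set xs")
    case True
    then obtain y where "y \<in> set (tl ys)" and var: "fst y \<in> fst ` set xs"
      by blast
    then obtain as zs rs where ys: "ys = as @ y # zs" "as \<noteq> []" and "walk c m (y # zs) rs"
      using walk_suffix less.prems(2) by metis
    moreover have "length (y # zs) < length ys" "distinct (y # zs)" "last (y # zs) = last ys"
      using less.prems(3) ys by auto
    ultimately show ?thesis
      using less.hyps[OF _ less.prems(1)] var by (metis list.sel(1))
  next
    case False
    then have disjoint: "set ps \<inter> set qs = {}"
      using walk_positions_disjoint less.prems(1,2) by (metis lollipop_def)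
    show ?thesis
    proof (cases "distinct qs")
      case True
      then have "distinct (ps @ qs)"
        using less.prems(1) disjoint by (simp add: lollipop_def)
      then show ?thesis
        using less.prems(1,2,4) by blast
    next
      case False
      then obtain ys1 qs1 zs rs where ys: "ys = ys1 @ zs" and "lollipop c m ys1 qs1"
        "walk c m zs rs" "fst (hd zs) \<in> fst ` set ys1"
        using walk_first_repeat less.prems(2,3) by metis
      moreover have "ys1 \<noteq> []" "zs \<noteq> []"
        using \<open>lollipop c m ys1 qs1\<close> \<open>walk c m zs rs\<close> by (simp_all add: lollipop_def walk_def)
      moreover have "distinct zs"
        using less.prems(3) ys by simp
      ultimately show ?thesis
        using less.hyps[of zs ys1 qs1 rs] by auto
    qed
  qed
qed

definition lits :: "nat \<Rightarrow> lit set" where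
  "lits n = {1..n} \<times> UNIV"

lemma finite_lits [simp]: "finite (lits n)"
  by (simp add: lits_def)

lemma card_lits: "card (lits n) = 2 * n"
  by (simp add: lits_def card_cartesian_product)

lemma neg_in_lits_iff [simp]: "neg l \<in> lits n \<longleftrightarrow> l \<in> lits n"
  by (simp add: lits_def neg_def mem_Times_iff)

lemma clause_subset_lits: "C \<in> clauses n \<Longrightarrow> C \<subseteq> lits n"
  by (auto simp: clauses_def lits_def mem_Times_iff)

lemma finite_clauses: "finite (clauses n)"
  by (rule finite_subset[of _ "Pow (lits n)"]) (auto dest: clause_subset_lits)

lemma clauses_nonempty: "2 \<le> n \<Longrightarrow> clauses n \<noteq> {}"
proof -
  assume "2 \<le> n"
  then have "{(1, True), (2, True)} \<in> clauses n"
    unfolding clauses_def by (intro CollectI exI[of _ "(1, True)"] exI[of _ "(2, True)"]) auto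
  then show ?thesis
    by (metis empty_iff)
qed

lemma card_clauses_ge: "2 * n * (n - 1) \<le> card (clauses n)"
proof -
  define L where "L = {(x, y) \<in> lits n \<times> lits n. fst x < fst y}"
  have "finite L"
    by (rule finite_subset[of _ "lits n \<times> lits n"]) (auto simp: L_def)
  have "inj_on (\<lambda>(x, y). {x, y}) L"
  proof (rule inj_onI, clarify)
    fix x y x' y' assume "(x, y) \<in> L" "(x', y') \<in> L" "{x, y} = {x', y'}"
    moreover from this have "fst x < fst y" "fst x' < fst y'"
      by (simp_all add: L_def)
    ultimately show "x = x' \<and> y = y'"
      by (metis doubleton_eq_iff order.asym)
  qed
  moreover have "{x, y} \<in> clauses n" if "(x, y) \<in> L" for x y
    using that unfolding L_def clauses_def lits_def
    by (intro CollectI exI[of _ x] exI[of _ y]) (auto simp: mem_Times_iff)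
  then have "(\<lambda>(x, y). {x, y}) ` L \<subseteq> clauses n"
    by auto
  ultimately have L_le: "card L \<le> card (clauses n)"
    using card_inj_on_le finite_clauses by blast
  have "card (lits n - {(fst x, True), (fst x, False)}) = 2 * n - 2" if "x \<in> lits n" for x
    using that by (subst card_Diff_subset) (auto simp: card_lits lits_def mem_Times_iff)
  then have "2 * n * (2 * n - 2) = card (SIGMA x:lits n. lits n - {(fst x, True), (fst x, False)})"
    by (simp add: card_lits)
  also have "(SIGMA x:lits n. lits n - {(fst x, True), (fst x, False)}) = L \<union> prod.swap ` L"
    by (auto simp: L_def image_iff prod_eq_iff neq_iff)
  also have "card (L \<union> prod.swap ` L) \<le> 2 * card L"
    using card_Un_le[of L "prod.swap ` L"] card_image_le[OF \<open>finite L\<close>, of prod.swap] by linarith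
  finally show ?thesis
    using L_le by (simp add: algebra_simps)
qed

section \<open>Witnesses of a pruning failure\<close>

lemma path_clauses_butlast:
  "x \<in> set (butlast xs) \<Longrightarrow> \<exists>y. {y, neg x} \<in> set (path_clauses xs)"
  by (induction xs rule: path_clauses.induct) auto

lemma path_clauses_tl:
  "y \<in> set (tl xs) \<Longrightarrow> \<exists>x. {y, neg x} \<in> set (path_clauses xs)"
  by (induction xs rule: path_clauses.induct) auto

lemma walk_lits:
  assumes valid: "\<forall>p<m. c p \<in> clauses n" and "walk c m xs ps"
  shows "set (butlast xs) \<subseteq> lits n" "set (tl xs) \<subseteq> lits n"
proof -
  have "set (path_clauses xs) = c ` set ps" "set ps \<subseteq> {..<m}"
    using assms(2) by (simp_all add: walk_def flip: set_map)
  then have "set (path_clauses xs) \<subseteq> clauses n"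
    using valid by auto
  then have clause_lits: "C \<in> set (path_clauses xs) \<Longrightarrow> C \<subseteq> lits n" for C
    using clause_subset_lits by blast
  show "set (butlast xs) \<subseteq> lits n"
    using path_clauses_butlast clause_lits by fastforce
  show "set (tl xs) \<subseteq> lits n"
    using path_clauses_tl clause_lits by fastforce
qed

lemma prune_failure_witness:
  assumes valid: "\<forall>p<m. c p \<in> clauses n" and "p0 < m"
    and split: "mset (map c [0..<m]) = add_mset (c p0) \<Psi>"
    and fails: "prune (add_mset (c p0) \<Psi>) \<noteq> add_mset (c p0) (prune \<Psi>)"
  obtains xs ps ys qs where "lollipop c m xs ps" "walk c m ys qs" "fst (hd ys) \<in> fst ` set xs"
    "distinct (ps @ qs)" "p0 \<in> set (ps @ qs)"
proof -
  obtain l1 l2 where "c p0 = {l1, l2}"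
    using valid \<open>p0 < m\<close> by (auto simp: clauses_def)
  then obtain l w where l: "neg l \<in> lclosure (add_mset (c p0) \<Psi>) {l}"
    and w: "w \<in> lclosure (add_mset (c p0) \<Psi>) {l}" and "neg w \<in> c p0"
    using prune_add_mset fails by metis
  then obtain z where z: "c p0 = {z, neg w}"
    using \<open>c p0 = {l1, l2}\<close> by (metis insert_commute insertE singletonD)
  obtain xs0 ps0 where "walk c m xs0 ps0" "hd xs0 = l" "last xs0 = neg l"
    using lclosure_imp_walk l split[symmetric] by metis
  then obtain xs ps where xs: "lollipop c m xs ps" "hd xs = l"
    using lollipop_of_walk by metis
  obtain ys0 qs0 where "walk c m ys0 qs0" "hd ys0 = l" "last ys0 = w"
    using lclosure_imp_walk w split[symmetric] by metis
  then obtain ys qs where ys: "walk c m ys qs" "hd ys = l" "last ys = w" "distinct ys"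
    using walk_distinct by metis
  have "fst (hd ys) \<in> fst ` set xs"
    using xs ys(2) by (metis hd_in_set image_eqI lollipop_def walk_def)
  then obtain xs' ps' ys' qs' where wit: "lollipop c m xs' ps'" "walk c m ys' qs'"
    "fst (hd ys') \<in> fst ` set xs'" "last ys' = w" "distinct (ps' @ qs')"
    using lollipop_walk_disjoint[OF xs(1) ys(1,4)] ys(3) by metis
  show thesis
  proof (cases "p0 \<in> set (ps' @ qs')")
    case True
    then show thesis
      using that wit by blast
  next
    case False
    have "walk c m (ys' @ [z]) (qs' @ [p0])"
      using walk_snoc[OF wit(2) \<open>p0 < m\<close>] z wit(4) by simp
    moreover have "hd (ys' @ [z]) = hd ys'"
      using wit(2) by (simp add: walk_def)
    ultimately show thesis
      using that[of xs' ps' "ys' @ [z]" "qs' @ [p0]"] wit False by auto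
  qed
qed

text \<open>The clauses of a lollipop whose literals are \<open>ts\<close> followed by \<open>neg (ts ! j)\<close>, and of a
  tail walk from the literal \<open>(fst (ts ! i), b)\<close> through \<open>ss\<close>.\<close>

definition witness_clauses :: "lit list \<Rightarrow> nat \<Rightarrow> nat \<Rightarrow> bool \<Rightarrow> lit list \<Rightarrow> clause list" where
  "witness_clauses ts j i b ss =
     path_clauses (ts @ [neg (ts ! j)]) @ path_clauses ((fst (ts ! i), b) # ss)"

lemma lollipop_walk_encoding:
  assumes valid: "\<forall>p<m. c p \<in> clauses n"
    and xs: "lollipop c m xs ps" and ys: "walk c m ys qs" "fst (hd ys) \<in> fst ` set xs"
  obtains ts j i b ss where "length ts = length ps" "set ts \<subseteq> lits n" "j < length ts"
    "i < length ts" "length ss = length qs" "set ss \<subseteq> lits n"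
    "map c (ps @ qs) = witness_clauses ts j i b ss"
proof -
  define ts where "ts = butlast xs"
  have walk: "walk c m xs ps"
    using xs by (simp add: lollipop_def)
  obtain j where j: "j < length ts" "ts ! j = neg (last xs)"
    using xs by (auto simp: lollipop_def ts_def in_set_conv_nth)
  have xs_eq: "xs = ts @ [neg (ts ! j)]"
    using walk j(2) by (simp add: ts_def walk_def)
  then have "fst ` set xs = fst ` set ts"
    using j(1) by auto
  then obtain i where i: "i < length ts" "fst (hd ys) = fst (ts ! i)"
    using ys(2) by (auto simp: in_set_conv_nth)
  define ss where "ss = tl ys"
  have ys_eq: "ys = (fst (ts ! i), snd (hd ys)) # ss"
    using ys(1) i(2) by (cases ys) (auto simp: walk_def ss_def)
  have "map c (ps @ qs) = witness_clauses ts j i (snd (hd ys)) ss"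
    using walk ys(1) xs_eq ys_eq by (simp add: walk_def witness_clauses_def)
  moreover have "length ts = length ps" "length ss = length qs"
    using walk_length[OF walk] walk_length[OF ys(1)] by (simp_all add: ts_def ss_def)
  moreover have "set ts \<subseteq> lits n" "set ss \<subseteq> lits n"
    using walk_lits[OF valid walk] walk_lits[OF valid ys(1)] by (simp_all add: ts_def ss_def)
  ultimately show thesis
    using that j(1) i(1) by blast
qed

definition clause_at :: "nat \<Rightarrow> nat \<Rightarrow> (nat \<Rightarrow> clause \<times> clause \<times> clause) \<Rightarrow> nat \<Rightarrow> clause" where
  "clause_at h M \<omega> p =
     (if p < M then fst (\<omega> (Suc p))
      else if h = 1 then fst (snd (\<omega> (Suc (p - M)))) else snd (snd (\<omega> (Suc (p - M)))))"

lemma Phi_eq_clause_at: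
  assumes "M \<le> m"
  shows "Phi h \<omega> M (m - M) = mset (map (clause_at h M \<omega>) [0..<m])"
proof -
  have shift: "[1..<Suc k] = map Suc [0..<k]" for k
    by (simp add: map_Suc_upt)
  have split: "[0..<m] = [0..<M] @ map (\<lambda>p. p + M) [0..<m - M]"
    using upt_add_eq_append[of 0 M "m - M"] assms by (simp add: map_add_upt)
  have "map (clause_at h M \<omega>) [0..<m] =
      map (\<lambda>i. fst (\<omega> i)) [1..<Suc M] @
      map (\<lambda>i. if h = 1 then fst (snd (\<omega> i)) else snd (snd (\<omega> i))) [1..<Suc (m - M)]"
    unfolding split shift map_map map_append by (intro arg_cong2[where f = append] map_cong)
      (auto simp: clause_at_def)
  then show ?thesis
    unfolding Phi_def by (metis mset_append)
qed

lemma Phi_add_mset_first: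
  assumes "1 \<le> M"
  shows "Phi h \<omega> M M' = add_mset (fst (\<omega> M)) (Phi h \<omega> (M - 1) M')"
proof -
  have "[1..<Suc M] = [1..<Suc (M - 1)] @ [M]"
    using assms by simp
  then show ?thesis
    unfolding Phi_def by simp
qed

lemma clause_at_in_clauses:
  assumes "2 \<le> n" "M \<le> m" "\<omega> \<in> set_pmf (sample n m)" "p < m"
  shows "clause_at h M \<omega> p \<in> clauses n"
proof -
  have "set_pmf (clause_pmf n) = clauses n"
    unfolding clause_pmf_def using finite_clauses clauses_nonempty assms(1) by simp
  then have "\<omega> i \<in> clauses n \<times> clauses n \<times> clauses n" if "i \<in> {1..m}" for i
    using assms(3) that by (auto simp: sample_def set_Pi_pmf PiE_dflt_def)
  then show ?thesis
    using assms(2,4) by (auto simp: clause_at_def mem_Times_iff)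
qed

lemma measure_pair_pmf_Times:
  "measure_pmf.prob (pair_pmf P Q) (A \<times> B) = measure_pmf.prob P A * measure_pmf.prob Q B"
proof -
  have "measure_pmf.prob (pair_pmf P Q) (A \<times> B) =
        measure_pmf.prob (pair_pmf P Q) ((A \<inter> set_pmf P) \<times> (B \<inter> set_pmf Q))"
    by (subst measure_Int_set_pmf[symmetric]) (auto intro: arg_cong[where f = "measure _"])
  also have "\<dots> = measure_pmf.prob P (A \<inter> set_pmf P) * measure_pmf.prob Q (B \<inter> set_pmf Q)"
    by (rule measure_pmf_prob_product) (auto intro: countable_subset)
  finally show ?thesis
    by (simp add: measure_Int_set_pmf)
qed

lemma prob_clause_pmf_le:
  assumes "2 \<le> n" "Y \<subseteq> {C}"
  shows "measure_pmf.prob (clause_pmf n) Y \<le> 1 / card (clauses n)"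
proof -
  have "measure_pmf.prob (clause_pmf n) Y \<le> measure_pmf.prob (clause_pmf n) {C}"
    using assms(2) by (intro measure_pmf.finite_measure_mono) auto
  also have "\<dots> = indicator (clauses n) C / card (clauses n)"
    unfolding clause_pmf_def measure_pmf_single
    using finite_clauses clauses_nonempty[OF assms(1)] by simp
  also have "\<dots> \<le> 1 / card (clauses n)"
    by (intro divide_right_mono) (auto simp: indicator_def)
  finally show ?thesis .
qed

definition prescribed :: "nat list \<Rightarrow> clause list \<Rightarrow> nat \<Rightarrow> clause set" where
  "prescribed pos Cs p = {C. \<forall>q<length pos. pos ! q = p \<longrightarrow> C = Cs ! q}"

lemma prob_prescribed_le:
  assumes "2 \<le> n"
  shows "measure_pmf.prob (clause_pmf n) (prescribed pos Cs p)
           \<le> (if p \<in> set pos then 1 / card (clauses n) else 1)"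
proof (cases "p \<in> set pos")
  case True
  then obtain q where "q < length pos" "pos ! q = p"
    by (auto simp: in_set_conv_nth)
  then have "prescribed pos Cs p \<subseteq> {Cs ! q}"
    by (auto simp: prescribed_def)
  then show ?thesis
    using prob_clause_pmf_le[OF assms] True by simp
qed simp

text \<open>The coordinate \<open>\<omega> i\<close> of the sample supplies the clauses at positions \<open>i - 1\<close> (if
  \<open>i \<le> M\<close>) and \<open>M + (i - 1)\<close>.\<close>

lemma clause_at_eq_subset_Pi:
  "{\<omega>. map (clause_at h M \<omega>) pos = Cs} \<subseteq> Pi {1..m} (\<lambda>i.
     (if i - 1 < M then prescribed pos Cs (i - 1) else UNIV) \<times>
     (if h = 1 then prescribed pos Cs (M + (i - 1)) \<times> UNIV else UNIV \<times> prescribed pos Cs (M + (i - 1))))"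
proof (intro subsetI Pi_I)
  fix \<omega> i assume "\<omega> \<in> {\<omega>. map (clause_at h M \<omega>) pos = Cs}" and i: "i \<in> {1..m}"
  then have at: "clause_at h M \<omega> (pos ! q) = Cs ! q" if "q < length pos" for q
    using that by auto
  have first: "clause_at h M \<omega> (i - 1) = fst (\<omega> i)" if "i - 1 < M"
    using i that by (simp add: clause_at_def)
  have second: "clause_at h M \<omega> (M + (i - 1)) =
      (if h = 1 then fst (snd (\<omega> i)) else snd (snd (\<omega> i)))"
    using i by (auto simp: clause_at_def)
  have "fst (\<omega> i) \<in> prescribed pos Cs (i - 1)" if "i - 1 < M"
  proof (unfold prescribed_def, intro CollectI allI impI)
    fix q assume "q < length pos" "pos ! q = i - 1"
    then show "fst (\<omega> i) = Cs ! q"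
      using at[of q] first[OF that] by simp
  qed
  moreover have "(if h = 1 then fst (snd (\<omega> i)) else snd (snd (\<omega> i))) \<in> prescribed pos Cs (M + (i - 1))"
  proof (unfold prescribed_def, intro CollectI allI impI)
    fix q assume "q < length pos" "pos ! q = M + (i - 1)"
    then show "(if h = 1 then fst (snd (\<omega> i)) else snd (snd (\<omega> i))) = Cs ! q"
      using at[of q] second by simp
  qed
  ultimately show "\<omega> i \<in> (if i - 1 < M then prescribed pos Cs (i - 1) else UNIV) \<times>
     (if h = 1 then prescribed pos Cs (M + (i - 1)) \<times> UNIV else UNIV \<times> prescribed pos Cs (M + (i - 1)))"
    by (cases "\<omega> i") (simp split: if_splits)
qed

lemma prod_lessThan_shift_split:
  fixes f :: "nat \<Rightarrow> real"
  assumes "M \<le> m" "\<And>p. m \<le> p \<Longrightarrow> f p = 1"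
  shows "(\<Prod>p<m. (if p < M then f p else 1) * f (p + M)) = (\<Prod>p<m. f p)"
proof -
  have "{p \<in> {..<m}. p < M} = {0..<M}"
    using assms(1) by auto
  then have "(\<Prod>p<m. if p < M then f p else 1) = (\<Prod>p\<in>{0..<M}. f p)"
    by (metis finite_lessThan prod.inter_filter)
  moreover have "(\<Prod>p<m. f (p + M)) = (\<Prod>p\<in>{M..<m}. f p) * (\<Prod>p\<in>{m..<m + M}. f p)"
    using prod.shift_bounds_nat_ivl[of f 0 M m] prod.atLeastLessThan_concat[of M m "m + M" f] assms(1)
    by (simp add: atLeast0LessThan)
  moreover have "(\<Prod>p\<in>{m..<m + M}. f p) = 1"
    using assms(2) by simp
  ultimately show ?thesis
    using prod.atLeastLessThan_concat[of 0 M m f] assms(1) by (simp add: prod.distrib atLeast0LessThan)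
qed

lemma prob_clause_at_eq_le:
  assumes "2 \<le> n" "M \<le> m" "distinct pos" "set pos \<subseteq> {..<m}"
  shows "measure_pmf.prob (sample n m) {\<omega>. map (clause_at h M \<omega>) pos = Cs}
           \<le> (1 / card (clauses n)) ^ length pos"
proof -
  define P where "P = clause_pmf n"
  define f where "f p = (if p \<in> set pos then 1 / card (clauses n) else 1 :: real)" for p
  define B where "B i = (if i - 1 < M then prescribed pos Cs (i - 1) else UNIV) \<times>
    (if h = 1 then prescribed pos Cs (M + (i - 1)) \<times> UNIV else UNIV \<times> prescribed pos Cs (M + (i - 1)))"
    for i
  have "measure_pmf.prob (sample n m) {\<omega>. map (clause_at h M \<omega>) pos = Cs}
      \<le> measure_pmf.prob (sample n m) (Pi {1..m} B)"
    using clause_at_eq_subset_Pi unfolding B_def by (intro measure_pmf.finite_measure_mono) auto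
  also have "\<dots> = (\<Prod>i\<in>{1..m}. measure_pmf.prob (pair_pmf P (pair_pmf P P)) (B i))"
    unfolding sample_def P_def by (rule measure_Pi_pmf_Pi) simp
  also have "\<dots> \<le> (\<Prod>i\<in>{1..m}. (if i - 1 < M then f (i - 1) else 1) * f (M + (i - 1)))"
  proof (intro prod_mono conjI)
    fix i
    have "measure_pmf.prob (pair_pmf P (pair_pmf P P)) (B i) =
        measure_pmf.prob P (if i - 1 < M then prescribed pos Cs (i - 1) else UNIV) *
        measure_pmf.prob P (prescribed pos Cs (M + (i - 1)))"
      by (simp add: B_def measure_pair_pmf_Times)
    also have "\<dots> \<le> (if i - 1 < M then f (i - 1) else 1) * f (M + (i - 1))"
      using prob_prescribed_le[OF assms(1)] unfolding P_def f_def by (intro mult_mono) auto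
    finally show "measure_pmf.prob (pair_pmf P (pair_pmf P P)) (B i) \<le> \<dots>" .
  qed simp
  also have "\<dots> = (\<Prod>p<m. (if p < M then f p else 1) * f (p + M))"
    using prod.atLeast1_atMost_eq[of "\<lambda>i. (if i - 1 < M then f (i - 1) else 1) * f (M + (i - 1))" m]
    by (simp add: add.commute cong: if_cong)
  also have "\<dots> = (\<Prod>p<m. f p)"
    using assms(2,4) by (intro prod_lessThan_shift_split) (auto simp: f_def)
  also have "\<dots> = (1 / card (clauses n)) ^ length pos"
    using assms(3,4) prod.inter_filter[of "{..<m}" "\<lambda>_. 1 / card (clauses n)" "\<lambda>p. p \<in> set pos"]
    by (simp add: f_def distinct_card Int_absorb1 Collect_conj_eq lessThan_def)
  finally show ?thesis .
qed

section \<open>The first moment bound\<close>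

lemma card_lists_containing_le:
  assumes "finite A"
  shows "card {xs. length xs = s \<and> set xs \<subseteq> A \<and> a \<in> set xs} \<le> s * card A ^ (s - 1)"
proof -
  let ?insert = "\<lambda>(j, ys). take j ys @ a # drop j ys"
  let ?short = "{..<s} \<times> {ys. set ys \<subseteq> A \<and> length ys = s - 1}"
  have "finite ?short"
    using assms by (simp add: finite_lists_length_eq)
  have "{xs. length xs = s \<and> set xs \<subseteq> A \<and> a \<in> set xs} \<subseteq> ?insert ` ?short"
  proof
    fix xs assume xs: "xs \<in> {xs. length xs = s \<and> set xs \<subseteq> A \<and> a \<in> set xs}"
    then obtain j where j: "j < s" "xs ! j = a"
      by (auto simp: in_set_conv_nth)
    define ys where "ys = take j xs @ drop (Suc j) xs"
    have "length xs = s" "set xs \<subseteq> A"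
      using xs by simp_all
    show "xs \<in> ?insert ` ?short"
    proof (rule image_eqI)
      show "xs = ?insert (j, ys)"
        using \<open>length xs = s\<close> j id_take_nth_drop[of j xs] by (simp add: ys_def)
      have "set ys \<subseteq> set xs"
        using set_take_subset[of j xs] set_drop_subset[of "Suc j" xs] by (auto simp: ys_def)
      moreover have "length ys = s - 1"
        using \<open>length xs = s\<close> j by (simp add: ys_def)
      ultimately show "(j, ys) \<in> ?short"
        using \<open>set xs \<subseteq> A\<close> j by auto
    qed
  qed
  then have "card {xs. length xs = s \<and> set xs \<subseteq> A \<and> a \<in> set xs} \<le> card (?insert ` ?short)"
    using \<open>finite ?short\<close> by (intro card_mono) auto
  also have "\<dots> \<le> card ?short"
    using \<open>finite ?short\<close> by (rule card_image_le)
  also have "card ?short = s * card A ^ (s - 1)"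
    using assms by (simp add: card_cartesian_product card_lists_length_eq)
  finally show ?thesis .
qed

definition witnesses ::
    "nat \<Rightarrow> nat \<Rightarrow> nat \<Rightarrow> nat \<Rightarrow> nat \<Rightarrow> (nat list \<times> lit list \<times> nat \<times> nat \<times> bool \<times> lit list) set" where
  "witnesses n m p0 k r =
     {pos. length pos = k + r \<and> distinct pos \<and> set pos \<subseteq> {..<m} \<and> p0 \<in> set pos} \<times>
     {ts. set ts \<subseteq> lits n \<and> length ts = k} \<times> {..<k} \<times> {..<k} \<times> UNIV \<times>
     {ss. set ss \<subseteq> lits n \<and> length ss = r}"

lemma finite_witnesses: "finite (witnesses n m p0 k r)"
proof -
  have "finite {pos. length pos = k + r \<and> distinct pos \<and> set pos \<subseteq> {..<m} \<and> p0 \<in> set pos}"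
    by (rule finite_subset[of _ "{pos. set pos \<subseteq> {..<m} \<and> length pos = k + r}"])
      (auto simp: finite_lists_length_eq)
  then show ?thesis
    by (simp add: witnesses_def finite_lists_length_eq)
qed

lemma card_witnesses_le:
  "card (witnesses n m p0 k r) \<le> (k + r) * m ^ (k + r - 1) * (2 * k ^ 2 * (2 * n) ^ (k + r))"
proof -
  have "card {pos. length pos = k + r \<and> distinct pos \<and> set pos \<subseteq> {..<m} \<and> p0 \<in> set pos}
      \<le> card {pos. length pos = k + r \<and> set pos \<subseteq> {..<m} \<and> p0 \<in> set pos}"
    by (rule card_mono) (auto intro: finite_subset[OF _ finite_lists_length_eq[of "{..<m}" "k + r"]])
  also have "\<dots> \<le> (k + r) * m ^ (k + r - 1)"
    using card_lists_containing_le[of "{..<m}"] by simp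
  finally have "card (witnesses n m p0 k r)
      \<le> (k + r) * m ^ (k + r - 1) * ((2 * n) ^ k * (k * (k * (2 * (2 * n) ^ r))))"
    by (simp add: witnesses_def card_cartesian_product card_lists_length_eq card_lits)
  then show ?thesis
    by (simp add: power_add power2_eq_square algebra_simps)
qed

lemma prob_UN_le_card_mult:
  fixes x :: real
  assumes "finite A" "\<And>a. a \<in> A \<Longrightarrow> measure_pmf.prob p (E a) \<le> x"
  shows "measure_pmf.prob p (\<Union>a\<in>A. E a) \<le> card A * x"
proof -
  have "measure_pmf.prob p (\<Union>a\<in>A. E a) \<le> (\<Sum>a\<in>A. measure_pmf.prob p (E a))"
    using assms(1) by (rule measure_pmf.finite_measure_subadditive_finite) auto
  also have "\<dots> \<le> card A * x"
    using sum_bounded_above[of A "\<lambda>a. measure_pmf.prob p (E a)" x] assms(2) by simp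
  finally show ?thesis .
qed

lemma prob_witness_events_le:
  assumes "2 \<le> n" "M \<le> m" "k \<le> s"
  shows "measure_pmf.prob (sample n m) (\<Union>(pos, ts, j, i, b, ss) \<in> witnesses n m p0 k (s - k).
           {\<omega>. map (clause_at h M \<omega>) pos = witness_clauses ts j i b ss})
     \<le> card (witnesses n m p0 k (s - k)) * (1 / card (clauses n)) ^ s"
proof (rule prob_UN_le_card_mult[OF finite_witnesses], clarify)
  fix pos ts j i b ss assume "(pos, ts, j, i, b, ss) \<in> witnesses n m p0 k (s - k)"
  then show "measure_pmf.prob (sample n m) {\<omega>. map (clause_at h M \<omega>) pos = witness_clauses ts j i b ss}
      \<le> (1 / card (clauses n)) ^ s"
    using prob_clause_at_eq_le[of n M m pos h] assms by (simp add: witnesses_def)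
qed

lemma prune_failure_in_witness:
  assumes "2 \<le> n" "1 \<le> M" "M \<le> m" "\<omega> \<in> set_pmf (sample n m)"
    and fails: "prune (Phi h \<omega> M (m - M)) \<noteq> add_mset (fst (\<omega> M)) (prune (Phi h \<omega> (M - 1) (m - M)))"
  obtains s k pos ts j i b ss where "s \<in> {1..m}" "k \<in> {1..s}"
    "(pos, ts, j, i, b, ss) \<in> witnesses n m (M - 1) k (s - k)"
    "map (clause_at h M \<omega>) pos = witness_clauses ts j i b ss"
proof -
  let ?c = "clause_at h M \<omega>"
  have valid: "\<forall>p<m. ?c p \<in> clauses n"
    using clause_at_in_clauses assms(1,3,4) by blast
  have "M - 1 < m" "?c (M - 1) = fst (\<omega> M)"
    using assms(2,3) by (simp_all add: clause_at_def)
  moreover have "mset (map ?c [0..<m]) = add_mset (fst (\<omega> M)) (Phi h \<omega> (M - 1) (m - M))"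
    using Phi_eq_clause_at[OF assms(3)] Phi_add_mset_first[OF assms(2)] by simp
  ultimately obtain xs ps ys qs where wit: "lollipop ?c m xs ps" "walk ?c m ys qs"
    "fst (hd ys) \<in> fst ` set xs" "distinct (ps @ qs)" "M - 1 \<in> set (ps @ qs)"
    using prune_failure_witness[OF valid, of "M - 1"] fails Phi_add_mset_first[OF assms(2)]
    by (metis (no_types, lifting))
  then obtain ts j i b ss where enc: "length ts = length ps" "set ts \<subseteq> lits n" "j < length ts"
    "i < length ts" "length ss = length qs" "set ss \<subseteq> lits n"
    "map ?c (ps @ qs) = witness_clauses ts j i b ss"
    using lollipop_walk_encoding[OF valid] by metis
  define s where "s = length (ps @ qs)"
  define k where "k = length ps"
  have "set (ps @ qs) \<subseteq> {..<m}"
    using wit(1,2) by (auto simp: lollipop_def walk_def)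
  then have "s \<le> m"
    using distinct_card[OF wit(4)] card_mono[of "{..<m}" "set (ps @ qs)"] by (simp add: s_def)
  moreover have "1 \<le> k" "k \<le> s"
    using enc(1,3) by (auto simp: s_def k_def)
  moreover have "(ps @ qs, ts, j, i, b, ss) \<in> witnesses n m (M - 1) k (s - k)"
    using wit enc \<open>set (ps @ qs) \<subseteq> {..<m}\<close> by (simp add: witnesses_def s_def k_def)
  ultimately show thesis
    using that enc(7) by auto
qed

lemma prob_prune_fails_le_witnesses:
  assumes "2 \<le> n" "1 \<le> M" "M \<le> m"
  shows "measure_pmf.prob (sample n m) {\<omega>. prune (Phi h \<omega> M (m - M)) \<noteq>
           add_mset (fst (\<omega> M)) (prune (Phi h \<omega> (M - 1) (m - M)))}
     \<le> (\<Sum>s\<in>{1..m}. \<Sum>k\<in>{1..s}. card (witnesses n m (M - 1) k (s - k)) * (1 / card (clauses n)) ^ s)"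
    (is "measure_pmf.prob _ ?F \<le> _")
proof -
  define E where "E s k = (\<Union>(pos, ts, j, i, b, ss) \<in> witnesses n m (M - 1) k (s - k).
    {\<omega>. map (clause_at h M \<omega>) pos = witness_clauses ts j i b ss})" for s k
  have "?F \<inter> set_pmf (sample n m) \<subseteq> (\<Union>s\<in>{1..m}. \<Union>k\<in>{1..s}. E s k)"
  proof
    fix \<omega> assume "\<omega> \<in> ?F \<inter> set_pmf (sample n m)"
    then obtain s k pos ts j i b ss where "s \<in> {1..m}" "k \<in> {1..s}"
      "(pos, ts, j, i, b, ss) \<in> witnesses n m (M - 1) k (s - k)"
      "map (clause_at h M \<omega>) pos = witness_clauses ts j i b ss"
      using prune_failure_in_witness[OF assms] by blast
    then show "\<omega> \<in> (\<Union>s\<in>{1..m}. \<Union>k\<in>{1..s}. E s k)"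
      unfolding E_def by blast
  qed
  then have "measure_pmf.prob (sample n m) ?F \<le>
      measure_pmf.prob (sample n m) (\<Union>s\<in>{1..m}. \<Union>k\<in>{1..s}. E s k)"
    by (subst measure_Int_set_pmf[symmetric]) (intro measure_pmf.finite_measure_mono, auto)
  also have "\<dots> \<le> (\<Sum>s\<in>{1..m}. \<Sum>k\<in>{1..s}. measure_pmf.prob (sample n m) (E s k))"
    by (intro order.trans[OF measure_pmf.finite_measure_subadditive_finite] sum_mono
        measure_pmf.finite_measure_subadditive_finite) auto
  also have "\<dots> \<le> (\<Sum>s\<in>{1..m}. \<Sum>k\<in>{1..s}.
      card (witnesses n m (M - 1) k (s - k)) * (1 / card (clauses n)) ^ s)"
    unfolding E_def using assms(1,3) by (intro sum_mono prob_witness_events_le) auto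
  finally show ?thesis .
qed

lemma card_witnesses_mult_prob_le:
  assumes "2 \<le> n" "1 \<le> m" "1 \<le> k" "k \<le> s"
  shows "card (witnesses n m p0 k (s - k)) * (1 / card (clauses n)) ^ s
           \<le> 2 * s ^ 3 * (real m / (real n - 1)) ^ s / m"
proof -
  have "real (2 * n * (n - 1)) \<le> card (clauses n)"
    using card_clauses_ge of_nat_mono by blast
  then have N: "2 * real n * (real n - 1) \<le> card (clauses n)"
    using assms(1) by (simp add: of_nat_diff)
  have pos: "0 < 2 * real n * (real n - 1)"
    using assms(1) by simp
  then have "0 < card (clauses n)"
    using N by linarith
  have "real (card (witnesses n m p0 k (s - k))) \<le> real (s * m ^ (s - 1) * (2 * k ^ 2 * (2 * n) ^ s))"
    using card_witnesses_le[of n m p0 k "s - k"] assms(4) by (intro of_nat_mono) simp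
  also have "\<dots> \<le> s * m ^ (s - 1) * (2 * s ^ 2 * (2 * n) ^ s)"
    using assms(4) by (intro of_nat_mono mult_left_mono mult_right_mono power_mono) auto
  finally have "card (witnesses n m p0 k (s - k)) * (1 / card (clauses n)) ^ s
      \<le> (s * m ^ (s - 1) * (2 * s ^ 2 * (2 * n) ^ s)) * (1 / (2 * real n * (real n - 1))) ^ s"
    using N pos \<open>0 < card (clauses n)\<close> by (intro mult_mono power_mono divide_left_mono) auto
  also have "\<dots> =
      2 * real s ^ 3 * real m ^ (s - 1) * (2 * real n * (1 / (2 * real n * (real n - 1)))) ^ s"
    by (simp only: power_mult_distrib) (simp add: power2_eq_square power3_eq_cube mult_ac)
  also have "2 * real n * (1 / (2 * real n * (real n - 1))) = 1 / (real n - 1)"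
    using assms(1) by simp
  also have "2 * real s ^ 3 * real m ^ (s - 1) * (1 / (real n - 1)) ^ s =
      2 * real s ^ 3 * (real m / (real n - 1)) ^ s / m"
    using assms(2,3,4) by (simp add: power_diff power_divide)
  finally show ?thesis .
qed

lemma prob_prune_fails_le:
  assumes "2 \<le> n" "1 \<le> M" "M \<le> m" "real m / (real n - 1) \<le> q"
    and summable: "summable (\<lambda>s. real s ^ 4 * q ^ s)"
  shows "measure_pmf.prob (sample n m) {\<omega>. prune (Phi h \<omega> M (m - M)) \<noteq>
           add_mset (fst (\<omega> M)) (prune (Phi h \<omega> (M - 1) (m - M)))}
     \<le> 2 / m * (\<Sum>s. real s ^ 4 * q ^ s)"
proof -
  have "0 \<le> real m / (real n - 1)"
    using assms(1) by simp
  have "(\<Sum>s\<in>{1..m}. \<Sum>k\<in>{1..s}. card (witnesses n m (M - 1) k (s - k)) * (1 / card (clauses n)) ^ s)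
      \<le> (\<Sum>s\<in>{1..m}. \<Sum>k\<in>{1..s}. 2 * s ^ 3 * q ^ s / m)"
  proof (intro sum_mono)
    fix s k assume "s \<in> {1..m}" "k \<in> {1..s}"
    then have "card (witnesses n m (M - 1) k (s - k)) * (1 / card (clauses n)) ^ s
        \<le> 2 * s ^ 3 * (real m / (real n - 1)) ^ s / m"
      using card_witnesses_mult_prob_le assms(1,2,3) by auto
    also have "\<dots> \<le> 2 * s ^ 3 * q ^ s / m"
      using assms(4) \<open>0 \<le> real m / (real n - 1)\<close>
      by (intro divide_right_mono mult_left_mono power_mono) auto
    finally show "card (witnesses n m (M - 1) k (s - k)) * (1 / card (clauses n)) ^ s
        \<le> 2 * s ^ 3 * q ^ s / m" .
  qed
  also have "\<dots> = 2 / m * (\<Sum>s\<in>{1..m}. real s ^ 4 * q ^ s)"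
    by (simp add: sum_distrib_left power_def algebra_simps)
  also have "\<dots> \<le> 2 / m * (\<Sum>s. real s ^ 4 * q ^ s)"
    using assms(4) \<open>0 \<le> real m / (real n - 1)\<close>
    by (intro mult_left_mono sum_le_suminf[OF summable]) auto
  finally show ?thesis
    using prob_prune_fails_le_witnesses[OF assms(1-3), of h] by linarith
qed

section \<open>Asymptotics\<close>

lemma summable_pow4_geometric:
  assumes "0 < q" "q < (1::real)"
  shows "summable (\<lambda>s. real s ^ 4 * q ^ s)"
proof -
  define r where "r = sqrt q"
  have r: "0 < r" "r < 1" "q = r * r"
    using assms by (simp_all add: r_def real_sqrt_lt_1_iff)
  have "(\<lambda>s. real s ^ 4 * r ^ s) \<longlonglongrightarrow> 0"
    using r by real_asymp
  then have "eventually (\<lambda>s. real s ^ 4 * r ^ s < 1) sequentially"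
    by (rule order_tendstoD(2)) simp
  then have "eventually (\<lambda>s. norm (real s ^ 4 * q ^ s) \<le> r ^ s) sequentially"
  proof eventually_elim
    case (elim s)
    have "norm (real s ^ 4 * q ^ s) = (real s ^ 4 * r ^ s) * r ^ s"
      using r by (simp add: power_mult_distrib abs_mult)
    also have "\<dots> \<le> r ^ s"
      using elim r by (simp add: mult_left_le_one_le)
    finally show ?case .
  qed
  then show ?thesis
    using r by (intro summable_comparison_test_ev[OF _ summable_geometric]) auto
qed

lemma prob_prune_fails_tendsto_0:
  fixes d :: real and m M :: "nat \<Rightarrow> nat"
  assumes "0 < d" "d < 2"
    and m: "(\<lambda>n. real (m n)) \<sim>[sequentially] (\<lambda>n. d * real n / 2)"
    and M: "eventually (\<lambda>n. 1 \<le> M n \<and> M n \<le> m n) sequentially"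
  shows "(\<lambda>n. measure_pmf.prob (sample n (m n)) {\<omega>. prune (Phi h \<omega> (M n) (m n - M n)) \<noteq>
           add_mset (fst (\<omega> (M n))) (prune (Phi h \<omega> (M n - 1) (m n - M n)))}) \<longlonglongrightarrow> 0"
proof -
  define q where "q = (2 + d) / 4"
  have q: "0 < q" "q < 1" "d / 2 < q"
    using assms(1,2) by (auto simp: q_def)
  have "(\<lambda>n. real (m n) / (real n - 1)) \<sim>[sequentially] (\<lambda>n. (d * real n / 2) / (real n - 1))"
    using m by (intro asymp_equiv_intros) auto
  moreover have "(\<lambda>n. (d * real n / 2) / (real n - 1)) \<longlonglongrightarrow> d / 2"
    by real_asymp
  ultimately have "(\<lambda>n. real (m n) / (real n - 1)) \<longlonglongrightarrow> d / 2"
    using asymp_equiv_tendsto_transfer asymp_equiv_sym by blast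
  then have "eventually (\<lambda>n. real (m n) / (real n - 1) < q) sequentially"
    using q(3) by (rule order_tendstoD(2))
  then have bound: "eventually (\<lambda>n. measure_pmf.prob (sample n (m n))
      {\<omega>. prune (Phi h \<omega> (M n) (m n - M n)) \<noteq>
           add_mset (fst (\<omega> (M n))) (prune (Phi h \<omega> (M n - 1) (m n - M n)))}
      \<le> 2 / real (m n) * (\<Sum>s. real s ^ 4 * q ^ s)) sequentially"
    using eventually_ge_at_top[of 2] M
    by eventually_elim (intro prob_prune_fails_le summable_pow4_geometric q(1,2); simp)
  have "filterlim (\<lambda>n. d * real n / 2) at_top sequentially"
    using assms(1) by real_asymp
  then have "filterlim (\<lambda>n. real (m n)) at_top sequentially"
    using asymp_equiv_at_top_transfer asymp_equiv_sym m by blast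
  then have lim: "(\<lambda>n. 2 / real (m n) * (\<Sum>s. real s ^ 4 * q ^ s)) \<longlonglongrightarrow> 0"
    by (intro tendsto_mult_left_zero tendsto_divide_0[OF tendsto_const]
        filterlim_at_top_imp_at_infinity)
  show ?thesis
    by (rule tendsto_sandwich[OF _ bound tendsto_const lim]) simp
qed

theorem lemma7p1:
  fixes d :: real and h :: nat and m M :: "nat \<Rightarrow> nat"
  assumes "0 < d" and "d < 2" and "h \<in> {1, 2}"
    and "(\<lambda>n. real (m n)) \<sim>[sequentially] (\<lambda>n. d * real n / 2)"
    and "eventually (\<lambda>n. 1 \<le> M n \<and> M n \<le> m n) sequentially"
  shows "(\<lambda>n. measure_pmf.prob (sample n (m n))
            {\<omega>. prune (Phi h \<omega> (M n) (m n - M n)) =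
                 prune (Phi h \<omega> (M n - 1) (m n - M n)) + {# fst (\<omega> (M n)) #}})
         \<longlonglongrightarrow> 1"
proof -
  let ?fails = "\<lambda>n. {\<omega>. prune (Phi h \<omega> (M n) (m n - M n)) \<noteq>
    add_mset (fst (\<omega> (M n))) (prune (Phi h \<omega> (M n - 1) (m n - M n)))}"
  have "(\<lambda>n. 1 - measure_pmf.prob (sample n (m n)) (?fails n)) \<longlonglongrightarrow> 1 - 0"
    using prob_prune_fails_tendsto_0[OF assms(1,2,4,5)] by (intro tendsto_diff tendsto_const)
  moreover have "measure_pmf.prob (sample n (m n)) (UNIV - ?fails n) =
      1 - measure_pmf.prob (sample n (m n)) (?fails n)" for n
    by (rule measure_pmf.prob_compl[simplified])
  ultimately show ?thesis
    by (simp add: set_diff_eq)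
qed

end
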